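(* Let $n\ge 2$, $\gamma\in\,]0,1]$, and let $\varphi:\mathbb{R}^{n-1}\to\mathbb{R}$ be Hölder continuous with exponent $\gamma$, i.e. $|\varphi(\bar x)-\varphi(\bar y)|\le M|\bar x-\bar y|^{\gamma}$ for all $\bar x,\bar y\in\mathbb{R}^{n-1}$ and some $M\ge 0$; let $\mathrm{Lip}_\gamma\varphi$ denote the best such constant $M$. Let $$\Omega=\{x=(\bar x,x_n)\in\mathbb{R}^n:\ x_n<\varphi(\bar x)\}.$$ Then for all $x\in\overline{\Omega}$ and all $h>0$, $$C_\gamma(x,h,\mathrm{Lip}_\gamma\varphi)\subset\Omega .$$ Moreover, there exists $c>0$ depending only on $n$, $\gamma$ and $\mathrm{Lip}_\gamma\varphi$ such that $$|B_\gamma(x,r)\cap\Omega|\ge c\, r^{n_\gamma}\qquad\text{for all } x\in\overline{\Omega}\text{ and all } r>0 .$$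
   Context: Points of $\mathbb{R}^n$ are written $x=(\bar x,x_n)$ with $\bar x\in\mathbb{R}^{n-1}$, $x_n\in\mathbb{R}$. For $\gamma\in\,]0,1]$, $\delta_\gamma(x,y)=\max\{|\bar x-\bar y|^\gamma,|x_n-y_n|\}$ and $B_\gamma(x,r)=\{y\in\mathbb{R}^n:\delta_\gamma(x,y)<r\}=\{y:\ |\bar x-\bar y|<r^{1/\gamma},\ |x_n-y_n|<r\}$. Set $n_\gamma=\frac{n-1}{\gamma}+1$. For $x\in\mathbb{R}^n$, $h>0$, $M\ge0$, the cusp with exponent $\gamma$, vertex $x$, height $h$ and opening $M$ is $C_\gamma(x,h,M)=\{y\in\mathbb{R}^n:\ x_n-h<y_n<x_n-M|\bar y-\bar x|^\gamma\}$. $|\cdot|$ of a set denotes Lebesgue measure. *)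

theory Defs
  imports "HOL-Analysis.Analysis"
begin

text \<open>Points of R^n are pairs (xbar, x_n) :: 'a \<times> real with 'a a Euclidean space of
  dimension n-1 (so n = DIM('a) + 1 \<ge> 2 automatically).\<close>

definition holder_cont :: "real \<Rightarrow> ('a::euclidean_space \<Rightarrow> real) \<Rightarrow> bool" where
  "holder_cont \<gamma> \<phi> \<longleftrightarrow> (\<exists>M\<ge>0. \<forall>x y. \<bar>\<phi> x - \<phi> y\<bar> \<le> M * norm (x - y) powr \<gamma>)"

definition lip_gamma :: "real \<Rightarrow> ('a::euclidean_space \<Rightarrow> real) \<Rightarrow> real" where
  "lip_gamma \<gamma> \<phi> = Inf {M. M \<ge> 0 \<and> (\<forall>x y. \<bar>\<phi> x - \<phi> y\<bar> \<le> M * norm (x - y) powr \<gamma>)}"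

definition subgraph :: "('a::euclidean_space \<Rightarrow> real) \<Rightarrow> ('a \<times> real) set" where
  "subgraph \<phi> = {x. snd x < \<phi> (fst x)}"

definition delta_gamma :: "real \<Rightarrow> 'a::euclidean_space \<times> real \<Rightarrow> 'a \<times> real \<Rightarrow> real" where
  "delta_gamma \<gamma> x y = max (norm (fst x - fst y) powr \<gamma>) \<bar>snd x - snd y\<bar>"

definition ball_gamma :: "real \<Rightarrow> 'a::euclidean_space \<times> real \<Rightarrow> real \<Rightarrow> ('a \<times> real) set" where
  "ball_gamma \<gamma> x r = {y. delta_gamma \<gamma> x y < r}"

definition cusp :: "real \<Rightarrow> 'a::euclidean_space \<times> real \<Rightarrow> real \<Rightarrow> real \<Rightarrow> ('a \<times> real) set" where
  "cusp \<gamma> x h M = {y. snd x - h < snd y \<and> snd y < snd x - M * norm (fst y - fst x) powr \<gamma>}"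

definition n_gamma :: "real \<Rightarrow> 'a::euclidean_space itself \<Rightarrow> real" where
  "n_gamma \<gamma> _ = real DIM('a) / \<gamma> + 1"

end

theory Submission
  imports Defs
begin

text \<open>Hoelder continuity with constant M gives phi(ybar) >= phi(xbar) - M |ybar - xbar|^gamma
  >= x_n - M |ybar - xbar|^gamma for every x in the closure of the subgraph, so the cusp of
  opening M with vertex x lies below the graph. For the volume bound put K = 2 (M + 1): the
  cylinder B(xbar, (r/K)^(1/gamma)) x ]x_n - r, x_n - r/2[ lies both in the cusp of height r
  and in B_gamma(x, r), and its volume is omega_(n-1) (r/K)^((n-1)/gamma) r/2 = c r^(n_gamma).\<close>

lemma holder_bound_imp_continuous:
  fixes \<phi> :: "'a::real_normed_vector \<Rightarrow> real"
  assumes "0 < \<gamma>" and bound: "\<forall>x y. \<bar>\<phi> x - \<phi> y\<bar> \<le> M * norm (x - y) powr \<gamma>"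
  shows "continuous_on UNIV \<phi>"
proof (rule continuous_at_imp_continuous_on, intro ballI)
  fix x :: 'a
  have "((\<lambda>y. norm (y - x)) \<longlongrightarrow> 0) (at x)"
    using LIM_zero[OF tendsto_ident_at[of x UNIV]] tendsto_norm_zero by blast
  then have "((\<lambda>y. norm (y - x) powr \<gamma>) \<longlongrightarrow> 0) (at x)"
    by (rule tendsto_zero_powrI[OF _ tendsto_const]) (use \<open>0 < \<gamma>\<close> in auto)
  then have "((\<lambda>y. M * norm (y - x) powr \<gamma>) \<longlongrightarrow> 0) (at x)"
    using tendsto_mult_right_zero by blast
  then have "((\<lambda>y. \<phi> y - \<phi> x) \<longlongrightarrow> 0) (at x)"
    by (rule Lim_null_comparison[rotated]) (use bound in auto)
  then show "isCont \<phi> x"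
    unfolding isCont_def by (rule LIM_zero_cancel)
qed

lemma holder_cont_imp_continuous:
  "0 < \<gamma> \<Longrightarrow> holder_cont \<gamma> \<phi> \<Longrightarrow> continuous_on UNIV \<phi>"
  unfolding holder_cont_def using holder_bound_imp_continuous by blast

lemma holder_bound_lip_gamma:
  fixes \<phi> :: "'a::euclidean_space \<Rightarrow> real"
  assumes "holder_cont \<gamma> \<phi>"
  shows "\<bar>\<phi> x - \<phi> y\<bar> \<le> lip_gamma \<gamma> \<phi> * norm (x - y) powr \<gamma>"
proof -
  define S where "S = {M. M \<ge> 0 \<and> (\<forall>x y. \<bar>\<phi> x - \<phi> y\<bar> \<le> M * norm (x - y) powr \<gamma>)}"
  have "S \<noteq> {}"
    using assms unfolding holder_cont_def S_def by auto
  have lip: "lip_gamma \<gamma> \<phi> = Inf S"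
    unfolding lip_gamma_def S_def ..
  show ?thesis
  proof (cases "norm (x - y) powr \<gamma> = 0")
    case True
    then show ?thesis
      using \<open>S \<noteq> {}\<close> by (auto simp: S_def)
  next
    case False
    then have pos: "norm (x - y) powr \<gamma> > 0"
      by simp
    have "\<bar>\<phi> x - \<phi> y\<bar> / norm (x - y) powr \<gamma> \<le> Inf S"
      by (rule cInf_greatest[OF \<open>S \<noteq> {}\<close>]) (use pos in \<open>auto simp: S_def divide_le_eq\<close>)
    then show ?thesis
      unfolding lip using pos by (simp add: divide_le_eq)
  qed
qed

lemma closure_subgraph_le:
  fixes \<phi> :: "'a::euclidean_space \<Rightarrow> real"
  assumes "continuous_on UNIV \<phi>" and "x \<in> closure (subgraph \<phi>)"
  shows "snd x \<le> \<phi> (fst x)"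
proof -
  have "closed {x :: 'a \<times> real. snd x \<le> \<phi> (fst x)}"
    by (rule closed_Collect_le)
      (auto intro!: continuous_intros continuous_on_compose2[OF assms(1)])
  then have "closure (subgraph \<phi>) \<subseteq> {x. snd x \<le> \<phi> (fst x)}"
    by (intro closure_minimal) (auto simp: subgraph_def)
  then show ?thesis
    using assms(2) by auto
qed

lemma open_subgraph:
  fixes \<phi> :: "'a::euclidean_space \<Rightarrow> real"
  assumes "continuous_on UNIV \<phi>"
  shows "open (subgraph \<phi>)"
  unfolding subgraph_def
  by (rule open_Collect_less)
    (auto intro!: continuous_intros continuous_on_compose2[OF assms])

lemma open_ball_gamma:
  assumes "0 < \<gamma>"
  shows "open (ball_gamma \<gamma> x r)"
proof -
  have "continuous_on UNIV (\<lambda>y::'a \<times> real. norm (fst x - fst y) powr \<gamma>)"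
    by (rule continuous_on_powr') (use assms in \<open>auto intro!: continuous_intros\<close>)
  then have "continuous_on UNIV (\<lambda>y. delta_gamma \<gamma> x y)"
    unfolding delta_gamma_def by (intro continuous_on_max) (auto intro!: continuous_intros)
  then show ?thesis
    unfolding ball_gamma_def by (intro open_Collect_less continuous_on_const)
qed

lemma cusp_subset_subgraph:
  fixes \<phi> :: "'a::euclidean_space \<Rightarrow> real"
  assumes bound: "\<forall>a b. \<bar>\<phi> a - \<phi> b\<bar> \<le> M * norm (a - b) powr \<gamma>"
    and "snd x \<le> \<phi> (fst x)"
  shows "cusp \<gamma> x h M \<subseteq> subgraph \<phi>"
proof
  fix y
  assume "y \<in> cusp \<gamma> x h M"
  moreover have "\<phi> (fst x) - \<phi> (fst y) \<le> M * norm (fst y - fst x) powr \<gamma>"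
    using bound[rule_format, of "fst x" "fst y"] by (simp add: norm_minus_commute)
  ultimately show "y \<in> subgraph \<phi>"
    using \<open>snd x \<le> \<phi> (fst x)\<close> by (auto simp: cusp_def subgraph_def)
qed

lemma cylinder_subset_cusp_inter_ball_gamma:
  fixes x :: "'a::euclidean_space \<times> real"
  assumes "0 < \<gamma>" "0 < r" "0 \<le> M"
  defines "K \<equiv> 2 * (M + 1)"
  shows "ball (fst x) ((r / K) powr (1 / \<gamma>)) \<times> {snd x - r <..< snd x - r / 2}
           \<subseteq> cusp \<gamma> x r M \<inter> ball_gamma \<gamma> x r"
proof
  fix y
  assume y: "y \<in> ball (fst x) ((r / K) powr (1 / \<gamma>)) \<times> {snd x - r <..< snd x - r / 2}"
  have "norm (fst y - fst x) powr \<gamma> \<le> ((r / K) powr (1 / \<gamma>)) powr \<gamma>"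
    using y assms(1) by (intro powr_mono2) (auto simp: dist_norm norm_minus_commute)
  also have "\<dots> = r / K"
    using assms by (simp add: K_def powr_powr)
  finally have near: "norm (fst y - fst x) powr \<gamma> \<le> r / K" .
  have "M * norm (fst y - fst x) powr \<gamma> \<le> M * (r / K)"
    using near \<open>0 \<le> M\<close> by (rule mult_left_mono)
  also have "\<dots> \<le> r / 2"
    using assms by (simp add: K_def field_simps)
  finally have "y \<in> cusp \<gamma> x r M"
    using y by (auto simp: cusp_def)
  moreover have "r / K < r"
    using assms by (simp add: K_def divide_less_eq)
  then have "y \<in> ball_gamma \<gamma> x r"
    using near y \<open>0 < r\<close>
    by (auto simp: ball_gamma_def delta_gamma_def norm_minus_commute)
  ultimately show "y \<in> cusp \<gamma> x r M \<inter> ball_gamma \<gamma> x r" ..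
qed

lemma emeasure_lborel_Times:
  fixes A :: "'a::euclidean_space set" and B :: "'b::euclidean_space set"
  assumes "A \<in> sets lborel" "B \<in> sets lborel"
  shows "emeasure lborel (A \<times> B) = emeasure lborel A * emeasure lborel B"
  using assms by (simp add: lborel_prod[symmetric] lborel.emeasure_pair_measure_Times)

lemma emeasure_cylinder:
  fixes a :: "'a::euclidean_space"
  assumes "0 \<le> \<rho>" "s \<le> t"
  shows "emeasure lborel (ball a \<rho> \<times> {s <..< t})
           = ennreal (unit_ball_vol DIM('a) * \<rho> ^ DIM('a) * (t - s))"
  using assms by (simp add: emeasure_lborel_Times emeasure_ball ennreal_mult)

lemma emeasure_ball_gamma_inter_subgraph_ge:
  fixes \<phi> :: "'a::euclidean_space \<Rightarrow> real"
  assumes "0 < \<gamma>" "0 \<le> M" and bound: "\<forall>a b. \<bar>\<phi> a - \<phi> b\<bar> \<le> M * norm (a - b) powr \<gamma>"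
    and "x \<in> closure (subgraph \<phi>)" "0 < r"
  shows "emeasure lborel (ball_gamma \<gamma> x r \<inter> subgraph \<phi>)
           \<ge> ennreal (unit_ball_vol DIM('a) / (2 * (M + 1)) powr (DIM('a) / \<gamma>) / 2
                      * r powr n_gamma \<gamma> TYPE('a))"
proof -
  define K where "K = 2 * (M + 1)"
  define d where "d = DIM('a)"
  define \<rho> where "\<rho> = (r / K) powr (1 / \<gamma>)"
  define C where "C = ball (fst x) \<rho> \<times> {snd x - r <..< snd x - r / 2}"
  have "K > 0"
    using \<open>0 \<le> M\<close> by (simp add: K_def)
  have cont: "continuous_on UNIV \<phi>"
    using holder_bound_imp_continuous[OF \<open>0 < \<gamma>\<close> bound] .
  have "cusp \<gamma> x r M \<subseteq> subgraph \<phi>"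
    using cusp_subset_subgraph[OF bound closure_subgraph_le[OF cont \<open>x \<in> _\<close>]] .
  then have "C \<subseteq> ball_gamma \<gamma> x r \<inter> subgraph \<phi>"
    using cylinder_subset_cusp_inter_ball_gamma[OF \<open>0 < \<gamma>\<close> \<open>0 < r\<close> \<open>0 \<le> M\<close>]
    unfolding C_def \<rho>_def K_def by blast
  then have "emeasure lborel C \<le> emeasure lborel (ball_gamma \<gamma> x r \<inter> subgraph \<phi>)"
    by (rule emeasure_mono)
      (simp add: borel_open open_Int open_ball_gamma[OF \<open>0 < \<gamma>\<close>] open_subgraph[OF cont])
  moreover have "unit_ball_vol d * \<rho> ^ d * (r / 2)
      = unit_ball_vol d / K powr (d / \<gamma>) / 2 * r powr n_gamma \<gamma> TYPE('a)"
  proof -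
    have "\<rho> ^ d * (r / 2) = r powr (d / \<gamma>) / K powr (d / \<gamma>) * r / 2"
      using \<open>0 < r\<close> \<open>K > 0\<close>
      by (simp add: \<rho>_def powr_realpow[symmetric] powr_powr powr_divide)
    also have "\<dots> = r powr n_gamma \<gamma> TYPE('a) / K powr (d / \<gamma>) / 2"
      using \<open>0 < r\<close> by (simp add: n_gamma_def d_def powr_add)
    finally show ?thesis
      by (simp add: mult.assoc)
  qed
  then have "emeasure lborel C
      = ennreal (unit_ball_vol d / K powr (d / \<gamma>) / 2 * r powr n_gamma \<gamma> TYPE('a))"
    using \<open>0 < r\<close> by (simp add: C_def emeasure_cylinder \<rho>_def d_def)
  ultimately show ?thesis
    unfolding K_def d_def by simp
qed

theorem lemma2p1:
  fixes \<gamma> L :: real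
  assumes "0 < \<gamma>" "\<gamma> \<le> 1" "L \<ge> 0"
  shows "(\<forall>\<phi>::'a::euclidean_space \<Rightarrow> real. holder_cont \<gamma> \<phi> \<longrightarrow>
            (\<forall>x\<in>closure (subgraph \<phi>). \<forall>h>0. cusp \<gamma> x h (lip_gamma \<gamma> \<phi>) \<subseteq> subgraph \<phi>))
       \<and> (\<exists>c>0. \<forall>\<phi>::'a \<Rightarrow> real. holder_cont \<gamma> \<phi> \<and> lip_gamma \<gamma> \<phi> = L \<longrightarrow>
            (\<forall>x\<in>closure (subgraph \<phi>). \<forall>r>0.
               emeasure lborel (ball_gamma \<gamma> x r \<inter> subgraph \<phi>)
                 \<ge> ennreal (c * r powr n_gamma \<gamma> TYPE('a))))"
proof (intro conjI allI impI ballI)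
  fix \<phi> :: "'a \<Rightarrow> real" and x h
  assume "holder_cont \<gamma> \<phi>" "x \<in> closure (subgraph \<phi>)"
  then show "cusp \<gamma> x h (lip_gamma \<gamma> \<phi>) \<subseteq> subgraph \<phi>"
    using cusp_subset_subgraph holder_bound_lip_gamma closure_subgraph_le
      holder_cont_imp_continuous[OF \<open>0 < \<gamma>\<close>] by blast
next
  define c where "c = unit_ball_vol DIM('a) / (2 * (L + 1)) powr (DIM('a) / \<gamma>) / 2"
  have "c > 0"
    using \<open>L \<ge> 0\<close> by (simp add: c_def)
  moreover have "emeasure lborel (ball_gamma \<gamma> x r \<inter> subgraph \<phi>)
      \<ge> ennreal (c * r powr n_gamma \<gamma> TYPE('a))"
    if "holder_cont \<gamma> \<phi> \<and> lip_gamma \<gamma> \<phi> = L" "x \<in> closure (subgraph \<phi>)" "r > 0"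
    for \<phi> :: "'a \<Rightarrow> real" and x r
    unfolding c_def using that holder_bound_lip_gamma[of \<gamma> \<phi>]
    by (intro emeasure_ball_gamma_inter_subgraph_ge \<open>0 < \<gamma>\<close> \<open>L \<ge> 0\<close>) auto
  ultimately show "\<exists>c>0. \<forall>\<phi>::'a \<Rightarrow> real. holder_cont \<gamma> \<phi> \<and> lip_gamma \<gamma> \<phi> = L \<longrightarrow>
            (\<forall>x\<in>closure (subgraph \<phi>). \<forall>r>0.
               emeasure lborel (ball_gamma \<gamma> x r \<inter> subgraph \<phi>)
                 \<ge> ennreal (c * r powr n_gamma \<gamma> TYPE('a)))"
    by blast
qed

end
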